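(* Let $N$ be a nonnegative integer. An alternating step function $\psi$ of order $N$ is uniquely determined by its Fourier coefficients $\hat\psi(0),\hat\psi(1),\dots,\hat\psi(N)$: if $\psi$ and $\varphi$ are alternating step functions of order $N$ with $\hat\psi(n)=\hat\varphi(n)$ for $n=0,\dots,N$, then $\hat\psi(n)=\hat\varphi(n)$ for all $n$, i.e. $\psi=\varphi$ a.e.
   Context: $\mathbb{T}$ is the unit circle with normalized Lebesgue measure; $\hat f(n)=\frac{1}{2\pi}\int_0^{2\pi} f(e^{i\theta})e^{-in\theta}\,d\theta$. For $c>0$ and $N$ a positive integer, an alternating step function of height $c$ and order $N$ is a real function in $L^\infty(\mathbb{T})$ that assumes (a.e.) alternately the values $c$ and $-c$ on $2N$ (nondegenerate) subarcs forming a partition of $\mathbb{T}$; an alternating step function of order $0$ is a constant function. The heights of $\psi$ and $\varphi$ are not assumed known or equal. *)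

theory Defs
  imports "HOL-Analysis.Analysis"
begin

text \<open>Functions on the unit circle are modelled as functions complex \<Rightarrow> real,
  evaluated at cis theta. Normalized Lebesgue measure: (1/(2 pi)) d theta.\<close>

definition fourier_coeff :: "(complex \<Rightarrow> real) \<Rightarrow> int \<Rightarrow> complex" where
  "fourier_coeff f n =
     (1 / (2 * pi)) * (LINT \<theta>:{0..2*pi}|lebesgue. complex_of_real (f (cis \<theta>)) * cis (- (of_int n) * \<theta>))"

definition alt_step :: "real \<Rightarrow> nat \<Rightarrow> (complex \<Rightarrow> real) \<Rightarrow> bool" where
  "alt_step c N f \<longleftrightarrow>
     (if N = 0 then (AE \<theta> in lebesgue. f (cis \<theta>) = c)
      else c > 0 \<and>
        (\<exists>t :: nat \<Rightarrow> real.
            (\<forall>k < 2 * N. t k < t (Suc k)) \<and> t (2 * N) = t 0 + 2 * pi \<and>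
            (\<forall>k < 2 * N. AE \<theta> in lebesgue.
                 \<theta> \<in> {t k <..< t (Suc k)} \<longrightarrow> f (cis \<theta>) = c * (-1) ^ k)))"

end

theory Submission
  imports Defs "HOL-Computational_Algebra.Polynomial"
begin

text \<open>
  Let the jump points of an alternating step function of order N \<ge> 1 be
  t 0 < ... < t (2N) = t 0 + 2\<pi>, and let m j, h j be the midpoint and half-length of the arc
  (t (2j+1), t (2j+2)). The factor cos (h j) - cos (\<theta> - m j) is negative exactly on that arc, so
  the product P of these N factors satisfies \<psi> = c * sgn P almost everywhere, and P is a real
  trigonometric polynomial of degree N. If also \<phi> = d * sgn R with d \<le> c, then (\<psi> - \<phi>) P \<ge> 0.
  As \<psi> - \<phi> is real, vanishing of its Fourier coefficients of index 0, ..., N implies vanishing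
  for -N, ..., N, so the integral of (\<psi> - \<phi>) P is 0. Hence (\<psi> - \<phi>) P = 0 almost everywhere,
  and P \<noteq> 0 almost everywhere gives \<psi> = \<phi>. Order 0 is the case P = R = 1.
\<close>

lemma periodic_shift_int:
  fixes Q :: "real \<Rightarrow> bool"
  assumes "\<And>x. Q (x + p) \<longleftrightarrow> Q x"
  shows "Q (x + of_int m * p) \<longleftrightarrow> Q x"
proof (induction m rule: int_induct[where k = 0])
  case (step1 m)
  then show ?case using assms[of "x + of_int m * p"] by (simp add: algebra_simps)
next
  case (step2 m)
  then show ?case using assms[of "x + of_int (m - 1) * p"] by (simp add: algebra_simps)
qed simp

lemma AE_periodic:
  fixes Q :: "real \<Rightarrow> bool"
  assumes "p > 0" and periodic: "\<And>x. Q (x + p) \<longleftrightarrow> Q x"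
    and "AE x in lebesgue. x \<in> {a<..<a + p} \<longrightarrow> Q x"
  shows "AE x in lebesgue. Q x"
proof -
  define B where "B = {x. x \<in> {a<..<a + p} \<and> \<not> Q x}"
  obtain Z where "Z \<in> null_sets lebesgue" "B \<subseteq> Z"
    using assms(3) by (auto simp: B_def eventually_ae_filter)
  then have "negligible B"
    by (metis negligible_iff_null_sets negligible_subset)
  define S where "S = (\<Union>m::int. (+) (m * p) ` B) \<union> range (\<lambda>m::int. a + m * p)"
  have "negligible (\<Union>m::int. (+) (m * p) ` B)"
    by (intro negligible_countable_Union) (auto intro: negligible_translation \<open>negligible B\<close>)
  moreover have "range (\<lambda>m::int. a + m * p) \<in> null_sets lebesgue"
    by (intro null_sets_completionI countable_imp_null_set_lborel) auto
  ultimately have "S \<in> null_sets lebesgue"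
    unfolding S_def by (simp add: negligible_iff_null_sets null_sets.Un)
  moreover have "{x \<in> space lebesgue. \<not> Q x} \<subseteq> S"
  proof clarify
    fix x assume "\<not> Q x"
    define m where "m = \<lfloor>(x - a) / p\<rfloor>"
    define y where "y = x - m * p"
    have "m \<le> (x - a) / p" "(x - a) / p < m + 1"
      unfolding m_def by linarith+
    then have "a \<le> y" "y < a + p"
      using \<open>p > 0\<close> unfolding y_def by (auto simp: field_simps)
    moreover have "Q y \<longleftrightarrow> Q x"
      using periodic_shift_int[of Q p y m, OF periodic] by (simp add: y_def)
    ultimately have "y = a \<or> y \<in> B"
      using \<open>\<not> Q x\<close> by (auto simp: B_def)
    moreover have "x = m * p + y"
      unfolding y_def by simp
    ultimately show "x \<in> S"
      unfolding S_def by auto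
  qed
  ultimately show ?thesis
    by (rule AE_I')
qed

lemma cis_periodic: "cis (x + 2*pi) = cis x"
  by (simp flip: cis_mult)

lemma cos_less_cos_outside:
  assumes "0 < h" "h < y" "y < 2*pi - h"
  shows "cos y < cos h"
proof (cases "y \<le> pi")
  case True
  then show ?thesis using assms by (intro cos_monotone_0_pi) auto
next
  case False
  have "cos y = cos (2*pi - y)" by (simp add: cos_diff)
  also have "\<dots> < cos h" using assms False by (intro cos_monotone_0_pi) auto
  finally show ?thesis .
qed

lemma cos_less_cos_inside:
  assumes "\<bar>x\<bar> < h" "h \<le> pi"
  shows "cos h < cos x"
  using cos_monotone_0_pi[of "\<bar>x\<bar>" h] assms by simp

definition arc_factor :: "real \<Rightarrow> real \<Rightarrow> real \<Rightarrow> real" where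
  "arc_factor a b \<theta> = cos ((b - a) / 2) - cos (\<theta> - (a + b) / 2)"

lemma arc_factor_neg:
  assumes "a < \<theta>" "\<theta> < b" "b - a \<le> 2*pi"
  shows "arc_factor a b \<theta> < 0"
  unfolding arc_factor_def
  using assms by (auto intro!: cos_less_cos_inside simp: abs_less_iff field_simps)

lemma arc_factor_pos:
  assumes "t0 < a" "a < b" "b \<le> t0 + 2*pi" "t0 < \<theta>" "\<theta> < t0 + 2*pi" "\<theta> < a \<or> b < \<theta>"
  shows "arc_factor a b \<theta> > 0"
proof -
  have "cos \<bar>\<theta> - (a + b) / 2\<bar> < cos ((b - a) / 2)"
    using assms by (intro cos_less_cos_outside) (auto simp: abs_if field_simps)
  then show ?thesis
    unfolding arc_factor_def by simp
qed

lemma chain_less: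
  fixes t :: "nat \<Rightarrow> 'a::order"
  assumes "\<And>k. k < n \<Longrightarrow> t k < t (Suc k)" "i < j" "j \<le> n"
  shows "t i < t j"
  using assms(2,3)
proof (induction j)
  case (Suc j)
  then show ?case
    using assms(1)[of j] by (cases "i = j") (auto intro: order.strict_trans)
qed simp

lemma chain_le:
  fixes t :: "nat \<Rightarrow> 'a::order"
  assumes "\<And>k. k < n \<Longrightarrow> t k < t (Suc k)" "i \<le> j" "j \<le> n"
  shows "t i \<le> t j"
  using chain_less[of n t i j] assms by (cases "i = j") auto

lemma chain_interval:
  fixes t :: "nat \<Rightarrow> 'a::linorder"
  assumes "t 0 < x" "x < t n" "x \<notin> t ` {..n}"
  shows "\<exists>k<n. t k < x \<and> x < t (Suc k)"
  using assms
proof (induction n)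
  case (Suc n)
  show ?case
  proof (cases "x < t n")
    case True
    with Suc show ?thesis by (force intro: less_SucI)
  next
    case False
    with Suc.prems show ?thesis by (auto simp: not_less le_less)
  qed
qed simp

lemma sgn_prod:
  fixes f :: "'a \<Rightarrow> 'b::idom_abs_sgn"
  shows "sgn (\<Prod>i\<in>A. f i) = (\<Prod>i\<in>A. sgn (f i))"
  by (induction A rule: infinite_finite_induct) (auto simp: sgn_mult)

definition arc_prod :: "(nat \<Rightarrow> real) \<Rightarrow> nat \<Rightarrow> real \<Rightarrow> real" where
  "arc_prod t N \<theta> = (\<Prod>j<N. arc_factor (t (2*j + 1)) (t (2*j + 2)) \<theta>)"

lemma sgn_arc_prod:
  assumes inc: "\<And>k. k < 2*N \<Longrightarrow> t k < t (Suc k)" and period: "t (2*N) = t 0 + 2*pi"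
    and k: "k < 2*N" "t k < \<theta>" "\<theta> < t (Suc k)"
  shows "sgn (arc_prod t N \<theta>) = (-1) ^ k"
proof -
  have less: "i < j \<Longrightarrow> j \<le> 2*N \<Longrightarrow> t i < t j" for i j
    using chain_less[of "2*N" t] inc by blast
  have le: "i \<le> j \<Longrightarrow> j \<le> 2*N \<Longrightarrow> t i \<le> t j" for i j
    using chain_le[of "2*N" t] inc by blast
  have \<theta>: "t 0 < \<theta>" "\<theta> < t 0 + 2*pi"
    using k le[of 0 k] le[of "Suc k" "2*N"] period by auto
  have factor: "sgn (arc_factor (t (2*j + 1)) (t (2*j + 2)) \<theta>) = (if j = k div 2 then (-1) ^ k else 1)"
    if "j < N" for j
  proof (cases "k = 2*j + 1")
    case True
    have "t (2*j + 2) - t (2*j + 1) \<le> 2*pi"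
      using le[of 0 "2*j + 1"] le[of "2*j + 2" "2*N"] period that by auto
    then show ?thesis
      using True k arc_factor_neg by simp
  next
    case False
    have "\<theta> < t (2*j + 1) \<or> t (2*j + 2) < \<theta>"
      using False k le[of "Suc k" "2*j + 1"] le[of "2*j + 2" k] that by (cases "k \<le> 2*j") auto
    moreover have "t 0 < t (2*j + 1)" "t (2*j + 1) < t (2*j + 2)" "t (2*j + 2) \<le> t 0 + 2*pi"
      using less[of 0 "2*j + 1"] less[of "2*j + 1" "2*j + 2"] le[of "2*j + 2" "2*N"] period that
      by auto
    ultimately have "arc_factor (t (2*j + 1)) (t (2*j + 2)) \<theta> > 0"
      using arc_factor_pos \<theta> by blast
    moreover have "j = k div 2 \<Longrightarrow> even k"
      using False by presburger
    ultimately show ?thesis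
      by auto
  qed
  have "sgn (arc_prod t N \<theta>) = (\<Prod>j<N. if j = k div 2 then (-1) ^ k else 1)"
    unfolding arc_prod_def sgn_prod using factor by (intro prod.cong) auto
  also have "\<dots> = (-1) ^ k"
    using k by simp
  finally show ?thesis .
qed

definition trig_poly :: "nat \<Rightarrow> (real \<Rightarrow> real) \<Rightarrow> bool" where
  "trig_poly N P \<longleftrightarrow>
     (\<exists>a. \<forall>\<theta>. complex_of_real (P \<theta>) = (\<Sum>k = - int N..int N. a k * cis (of_int k * \<theta>)))"

lemma trig_poly_continuous:
  assumes "trig_poly N P"
  shows "continuous_on UNIV P"
proof -
  obtain a where a: "\<And>\<theta>. complex_of_real (P \<theta>) = (\<Sum>k = - int N..int N. a k * cis (of_int k * \<theta>))"
    using assms unfolding trig_poly_def by blast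
  have "P = (\<lambda>\<theta>. Re (\<Sum>k = - int N..int N. a k * cis (of_int k * \<theta>)))"
    by (metis a Re_complex_of_real)
  then show ?thesis
    by (simp add: continuous_intros)
qed

lemma unit_circle_affine_Re_poly:
  fixes z e :: complex and A :: real
  assumes "norm z = 1"
  shows "z * complex_of_real (A - Re (z * e)) = poly [:- cnj e / 2, complex_of_real A, - e / 2:] z"
proof -
  have "z \<noteq> 0" "z * cnj z = 1"
    using assms complex_norm_square[of z] by auto
  then have "cnj z = 1 / z"
    by (simp add: field_simps)
  have Re: "complex_of_real (Re (z * e)) = (z * e + cnj (z * e)) / 2"
    by (subst complex_add_cnj) simp
  show ?thesis
    unfolding of_real_diff Re complex_cnj_mult \<open>cnj z = 1 / z\<close>
    using \<open>z \<noteq> 0\<close> by (simp add: field_simps)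
qed

lemma unit_circle_prod_affine_Re_poly:
  fixes A :: "nat \<Rightarrow> real" and e :: "nat \<Rightarrow> complex"
  shows "\<exists>q. degree q \<le> 2*m \<and>
           (\<forall>z. norm z = 1 \<longrightarrow> z ^ m * complex_of_real (\<Prod>j<m. A j - Re (z * e j)) = poly q z)"
proof (induction m)
  case 0
  show ?case by (intro exI[of _ "[:1:]"]) simp
next
  case (Suc m)
  then obtain q where q: "degree q \<le> 2*m"
    "\<And>z. norm z = 1 \<Longrightarrow> z ^ m * complex_of_real (\<Prod>j<m. A j - Re (z * e j)) = poly q z"
    by blast
  define r where "r = [:- cnj (e m) / 2, complex_of_real (A m), - e m / 2:]"
  have "degree r \<le> 2"
    by (simp add: r_def)
  then have "degree (q * r) \<le> 2 * Suc m"
    using q(1) degree_mult_le[of q r] by simp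
  moreover have "z ^ Suc m * complex_of_real (\<Prod>j<Suc m. A j - Re (z * e j)) = poly (q * r) z"
    if "norm z = 1" for z
  proof -
    have "z ^ Suc m * complex_of_real (\<Prod>j<Suc m. A j - Re (z * e j))
        = (z ^ m * complex_of_real (\<Prod>j<m. A j - Re (z * e j)))
            * (z * complex_of_real (A m - Re (z * e m)))"
      by (simp add: algebra_simps)
    also have "\<dots> = poly q z * poly r z"
      unfolding q(2)[OF that] unit_circle_affine_Re_poly[OF that] r_def ..
    finally show ?thesis
      by simp
  qed
  ultimately show ?case by blast
qed

lemma trig_poly_prod_affine_Re:
  fixes A :: "nat \<Rightarrow> real" and e :: "nat \<Rightarrow> complex"
  shows "trig_poly m (\<lambda>\<theta>. \<Prod>j<m. A j - Re (cis \<theta> * e j))"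
proof -
  obtain q where q: "degree q \<le> 2*m"
    "\<And>z. norm z = 1 \<Longrightarrow> z ^ m * complex_of_real (\<Prod>j<m. A j - Re (z * e j)) = poly q z"
    using unit_circle_prod_affine_Re_poly by blast
  have "complex_of_real (\<Prod>j<m. A j - Re (cis \<theta> * e j))
          = (\<Sum>k = - int m..int m. coeff q (nat (k + int m)) * cis (of_int k * \<theta>))" for \<theta>
  proof -
    have "poly q (cis \<theta>) = (\<Sum>i\<le>2*m. coeff q i * cis \<theta> ^ i)"
      unfolding poly_altdef using q(1)
      by (intro sum.mono_neutral_left) (auto simp: coeff_eq_0)
    then have "complex_of_real (\<Prod>j<m. A j - Re (cis \<theta> * e j))
                 = (\<Sum>i\<le>2*m. coeff q i * cis \<theta> ^ i) / cis \<theta> ^ m"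
      using q(2)[of "cis \<theta>"] by (simp add: nonzero_eq_divide_eq mult.commute)
    also have "\<dots> = (\<Sum>i\<le>2*m. coeff q i * (cis \<theta> ^ i / cis \<theta> ^ m))"
      by (simp add: sum_divide_distrib)
    also have "\<dots> = (\<Sum>i\<le>2*m. coeff q i * cis (of_int (int i - int m) * \<theta>))"
    proof (rule sum.cong)
      fix i
      have "cis \<theta> ^ i / cis \<theta> ^ m = cis (real i * \<theta>) / cis (real m * \<theta>)"
        by (simp only: Complex.DeMoivre)
      also have "\<dots> = cis (of_int (int i - int m) * \<theta>)"
        by (simp add: cis_divide algebra_simps)
      finally show "coeff q i * (cis \<theta> ^ i / cis \<theta> ^ m) = coeff q i * cis (of_int (int i - int m) * \<theta>)"
        by simp
    qed simp
    also have "\<dots> = (\<Sum>k = - int m..int m. coeff q (nat (k + int m)) * cis (of_int k * \<theta>))"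
      by (rule sum.reindex_bij_witness[of _ "\<lambda>k. nat (k + int m)" "\<lambda>i. int i - int m"]) auto
    finally show ?thesis .
  qed
  then show ?thesis
    unfolding trig_poly_def by (intro exI[of _ "\<lambda>k. coeff q (nat (k + int m))"]) blast
qed

lemma trig_poly_arc_prod: "trig_poly N (arc_prod t N)"
proof -
  define A where "A j = cos ((t (2*j + 2) - t (2*j + 1)) / 2)" for j
  define e where "e j = cis (- ((t (2*j + 1) + t (2*j + 2)) / 2))" for j
  have "arc_prod t N = (\<lambda>\<theta>. \<Prod>j<N. A j - Re (cis \<theta> * e j))"
    unfolding arc_prod_def arc_factor_def A_def e_def cis_mult by simp
  then show ?thesis
    by (simp only: trig_poly_prod_affine_Re)
qed

lemma arc_prod_periodic: "arc_prod t N (\<theta> + 2*pi) = arc_prod t N \<theta>"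
proof -
  have "cos (\<theta> + 2*pi - x) = cos (\<theta> - x)" for x
    by (metis add_diff_eq cos_periodic diff_add_eq)
  then show ?thesis
    by (simp add: arc_prod_def arc_factor_def)
qed

lemma alt_step_sgn_trig_poly:
  assumes "alt_step c N \<psi>"
  obtains P where "trig_poly N P"
    and "AE \<theta> in lebesgue. P \<theta> \<noteq> 0 \<and> \<psi> (cis \<theta>) = c * sgn (P \<theta>)"
    and "if N = 0 then P = (\<lambda>_. 1) else 0 < c"
proof (cases "N = 0")
  case True
  then have "arc_prod t N = (\<lambda>_. 1)" for t
    by (simp add: arc_prod_def fun_eq_iff)
  then show ?thesis
    using that[of "arc_prod id N"] assms True trig_poly_arc_prod[of N id]
    by (simp add: alt_step_def)
next
  case False
  then obtain t where "0 < c" and inc: "\<And>k. k < 2*N \<Longrightarrow> t k < t (Suc k)"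
    and period: "t (2*N) = t 0 + 2*pi"
    and arcs: "\<And>k. k < 2*N \<Longrightarrow> AE \<theta> in lebesgue. \<theta> \<in> {t k<..<t (Suc k)} \<longrightarrow> \<psi> (cis \<theta>) = c * (-1) ^ k"
    using assms unfolding alt_step_def by auto
  let ?Q = "\<lambda>\<theta>. arc_prod t N \<theta> \<noteq> 0 \<and> \<psi> (cis \<theta>) = c * sgn (arc_prod t N \<theta>)"
  have "AE \<theta> in lebesgue. \<forall>k\<in>{..<2*N}. \<theta> \<in> {t k<..<t (Suc k)} \<longrightarrow> \<psi> (cis \<theta>) = c * (-1) ^ k"
    using arcs by (intro AE_finite_allI) auto
  moreover have "AE \<theta> in lebesgue. \<theta> \<notin> t ` {..2*N}"
    by (rule AE_discrete_difference) (auto intro: countable_finite)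
  ultimately have "AE \<theta> in lebesgue. \<theta> \<in> {t 0<..<t 0 + 2*pi} \<longrightarrow> ?Q \<theta>"
  proof eventually_elim
    case (elim \<theta>)
    show ?case
    proof
      assume "\<theta> \<in> {t 0<..<t 0 + 2*pi}"
      then obtain k where "k < 2*N" "t k < \<theta>" "\<theta> < t (Suc k)"
        using chain_interval[of t \<theta> "2*N"] elim period by auto
      then have "sgn (arc_prod t N \<theta>) = (-1) ^ k"
        by (simp add: sgn_arc_prod[OF inc period])
      with elim \<open>k < 2*N\<close> \<open>t k < \<theta>\<close> \<open>\<theta> < t (Suc k)\<close> show "?Q \<theta>"
        by (auto simp: sgn_0_0)
    qed
  qed
  then have "AE \<theta> in lebesgue. ?Q \<theta>"
    by (rule AE_periodic[rotated 2]) (simp_all add: arc_prod_periodic cis_periodic)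
  with that[of "arc_prod t N"] show ?thesis
    using trig_poly_arc_prod \<open>0 < c\<close> False by presburger
qed

lemma borel_measurable_cis_mult: "(\<lambda>\<theta>. cis (x * \<theta>)) \<in> borel_measurable lebesgue"
  by (intro measurable_completion) (simp add: borel_measurable_continuous_onI continuous_intros)

lemma set_integrable_bounded:
  fixes f :: "'a \<Rightarrow> 'b::{banach, second_countable_topology}"
  assumes "A \<in> sets M" "emeasure M A < \<infinity>" "f \<in> borel_measurable M"
    and "AE x in M. x \<in> A \<longrightarrow> norm (f x) \<le> B"
  shows "set_integrable M A f"
proof (rule set_integrable_bound[where f = "\<lambda>_. B"])
  show "set_integrable M A (\<lambda>_. B)"
    using assms(1,2) by (simp add: set_integrable_def)
  show "set_borel_measurable M A f"
    using assms(1,3) unfolding set_borel_measurable_def by measurable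
  show "AE x in M. x \<in> A \<longrightarrow> norm (f x) \<le> norm B"
    using assms(4) by eventually_elim auto
qed

lemma set_integral_sum:
  fixes f :: "'i \<Rightarrow> 'a \<Rightarrow> 'b::{banach, second_countable_topology}"
  assumes "\<And>i. i \<in> I \<Longrightarrow> set_integrable M A (f i)"
  shows "(LINT x:A|M. (\<Sum>i\<in>I. f i x)) = (\<Sum>i\<in>I. LINT x:A|M. f i x)"
  using assms unfolding set_lebesgue_integral_def set_integrable_def
  by (simp add: scaleR_sum_right Bochner_Integration.integral_sum)

lemma set_integral_cnj: "(LINT x:A|M. cnj (f x)) = cnj (LINT x:A|M. f x)"
  unfolding set_lebesgue_integral_def by (simp flip: Bochner_Integration.integral_cnj)

lemma set_integral_mult_trig_poly_eq_0:
  fixes g P :: "real \<Rightarrow> real" and M :: "real measure"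
  assumes P: "trig_poly N P"
    and integrable: "\<And>k::int. set_integrable M A (\<lambda>\<theta>. complex_of_real (g \<theta>) * cis (of_int k * \<theta>))"
    and orth: "\<And>n::int. 0 \<le> n \<Longrightarrow> n \<le> int N \<Longrightarrow>
                 (LINT \<theta>:A|M. complex_of_real (g \<theta>) * cis (- of_int n * \<theta>)) = 0"
  shows "(LINT \<theta>:A|M. g \<theta> * P \<theta>) = 0"
proof -
  have orth_all: "(LINT \<theta>:A|M. complex_of_real (g \<theta>) * cis (of_int k * \<theta>)) = 0"
    if "\<bar>k\<bar> \<le> int N" for k
  proof (cases "k \<le> 0")
    case True
    then show ?thesis using orth[of "- k"] that by simp
  next
    case False
    \<comment> \<open>\<open>g\<close> is real, so its coefficients at \<open>k\<close> and \<open>-k\<close> are conjugate\<close>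
    have "(LINT \<theta>:A|M. complex_of_real (g \<theta>) * cis (of_int k * \<theta>))
        = cnj (LINT \<theta>:A|M. complex_of_real (g \<theta>) * cis (- of_int k * \<theta>))"
      by (simp add: cis_cnj flip: set_integral_cnj)
    then show ?thesis using orth[of k] that False by simp
  qed
  obtain a where a: "\<And>\<theta>. complex_of_real (P \<theta>) = (\<Sum>k = - int N..int N. a k * cis (of_int k * \<theta>))"
    using P unfolding trig_poly_def by blast
  have "complex_of_real (LINT \<theta>:A|M. g \<theta> * P \<theta>)
      = (LINT \<theta>:A|M. (\<Sum>k = - int N..int N. a k * (complex_of_real (g \<theta>) * cis (of_int k * \<theta>))))"
    by (simp add: a sum_distrib_left ac_simps flip: set_integral_complex_of_real)
  also have "\<dots> = (\<Sum>k = - int N..int N. a k * (LINT \<theta>:A|M. complex_of_real (g \<theta>) * cis (of_int k * \<theta>)))"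
    by (subst set_integral_sum) (auto intro: integrable)
  also have "\<dots> = 0"
    by (intro sum.neutral) (simp add: orth_all abs_le_iff)
  finally show ?thesis
    by simp
qed

lemma AE_eq_0_of_nonneg_mult_trig_poly:
  fixes g P :: "real \<Rightarrow> real"
  assumes g: "g \<in> borel_measurable lebesgue" "AE \<theta> in lebesgue. \<bar>g \<theta>\<bar> \<le> B"
    and P: "trig_poly N P" "AE \<theta> in lebesgue. P \<theta> \<noteq> 0 \<and> 0 \<le> g \<theta> * P \<theta>"
    and orth: "\<And>n::int. 0 \<le> n \<Longrightarrow> n \<le> int N \<Longrightarrow>
                 (LINT \<theta>:{a..b}|lebesgue. complex_of_real (g \<theta>) * cis (- of_int n * \<theta>)) = 0"
  shows "AE \<theta> in lebesgue. \<theta> \<in> {a..b} \<longrightarrow> g \<theta> = 0"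
proof -
  have fin: "emeasure lebesgue {a..b} < \<infinity>"
    by (cases "a \<le> b") auto
  have P_cont: "continuous_on UNIV P"
    using P(1) by (rule trig_poly_continuous)
  then have P_meas: "P \<in> borel_measurable lebesgue"
    by (intro measurable_completion) (simp add: borel_measurable_continuous_onI)
  have "set_integrable lebesgue {a..b} (\<lambda>\<theta>. complex_of_real (g \<theta>) * cis (of_int k * \<theta>))" for k
    using g fin
    by (intro set_integrable_bounded[where B = B] borel_measurable_times borel_measurable_cis_mult
        measurable_compose[OF _ borel_measurable_of_real]) (auto simp: norm_mult)
  then have int0: "(LINT \<theta>:{a..b}|lebesgue. g \<theta> * P \<theta>) = 0"
    using orth by (rule set_integral_mult_trig_poly_eq_0[OF P(1)])
  obtain C where C: "\<And>\<theta>. \<theta> \<in> {a..b} \<Longrightarrow> \<bar>P \<theta>\<bar> \<le> C"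
    using compact_imp_bounded[OF compact_continuous_image[OF continuous_on_subset[OF P_cont]]]
    by (metis bounded_real compact_Icc image_eqI subset_UNIV)
  have "set_integrable lebesgue {a..b} (\<lambda>\<theta>. g \<theta> * P \<theta>)"
    using g(2) fin
    by (intro set_integrable_bounded[where B = "B * C"] borel_measurable_times g(1) P_meas)
       (auto elim!: eventually_mono simp: abs_mult intro!: mult_mono C)
  moreover have "AE \<theta> in lebesgue. 0 \<le> indicator {a..b} \<theta> *\<^sub>R (g \<theta> * P \<theta>)"
    using P(2) by eventually_elim (simp split: split_indicator)
  ultimately have "AE \<theta> in lebesgue. indicator {a..b} \<theta> *\<^sub>R (g \<theta> * P \<theta>) = 0"
    using int0 unfolding set_lebesgue_integral_def set_integrable_def
    by (subst (asm) integral_nonneg_eq_0_iff_AE) simp_all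
  with P(2) show ?thesis
    by eventually_elim (auto split: split_indicator)
qed

lemma alt_step_measurable:
  assumes "alt_step c N \<psi>"
  shows "(\<lambda>\<theta>. \<psi> (cis \<theta>)) \<in> borel_measurable lebesgue"
proof -
  obtain P where P: "trig_poly N P" "AE \<theta> in lebesgue. P \<theta> \<noteq> 0 \<and> \<psi> (cis \<theta>) = c * sgn (P \<theta>)"
    using alt_step_sgn_trig_poly[OF assms] by blast
  from P(1) have "P \<in> borel_measurable lebesgue"
    by (intro measurable_completion) (simp add: borel_measurable_continuous_onI trig_poly_continuous)
  then have "(\<lambda>\<theta>. c * sgn (P \<theta>)) \<in> borel_measurable lebesgue"
    by measurable
  moreover from P(2) have "AE \<theta> in lebesgue. c * sgn (P \<theta>) = \<psi> (cis \<theta>)"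
    by eventually_elim simp
  ultimately show ?thesis
    by (rule borel_measurable_AE)
qed

lemma alt_step_AE_bounded:
  assumes "alt_step c N \<psi>"
  shows "AE \<theta> in lebesgue. \<bar>\<psi> (cis \<theta>)\<bar> \<le> \<bar>c\<bar>"
proof -
  obtain P where "AE \<theta> in lebesgue. P \<theta> \<noteq> 0 \<and> \<psi> (cis \<theta>) = c * sgn (P \<theta>)"
    using alt_step_sgn_trig_poly[OF assms] by blast
  then show ?thesis
    by eventually_elim (simp add: abs_mult)
qed

lemma alt_step_set_integrable:
  assumes "alt_step c N \<psi>"
  shows "set_integrable lebesgue {a..b} (\<lambda>\<theta>. complex_of_real (\<psi> (cis \<theta>)) * cis (x * \<theta>))"
proof -
  have "emeasure lebesgue {a..b} < \<infinity>"
    by (cases "a \<le> b") auto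
  with alt_step_AE_bounded[OF assms] show ?thesis
    by (intro set_integrable_bounded[where B = "\<bar>c\<bar>"] borel_measurable_times borel_measurable_cis_mult
        measurable_compose[OF alt_step_measurable[OF assms] borel_measurable_of_real])
       (auto elim!: eventually_mono simp: norm_mult)
qed

lemma fourier_coeff_cong_AE:
  assumes "(\<lambda>\<theta>. f (cis \<theta>)) \<in> borel_measurable lebesgue"
    and "AE \<theta> in lebesgue. f (cis \<theta>) = g (cis \<theta>)"
  shows "fourier_coeff f = fourier_coeff g"
proof
  fix n
  have "(\<lambda>\<theta>. complex_of_real (h (cis \<theta>)) * cis (- of_int n * \<theta>)) \<in> borel_measurable lebesgue"
    if "(\<lambda>\<theta>. h (cis \<theta>)) \<in> borel_measurable lebesgue" for h
    using that by (intro borel_measurable_times borel_measurable_cis_mult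
        measurable_compose[OF _ borel_measurable_of_real])
  moreover have "(\<lambda>\<theta>. g (cis \<theta>)) \<in> borel_measurable lebesgue"
    using assms by (rule borel_measurable_AE)
  ultimately show "fourier_coeff f n = fourier_coeff g n"
    unfolding fourier_coeff_def using assms
    by (intro arg_cong[where f = "(*) _"] set_lebesgue_integral_cong_AE) (auto elim!: eventually_mono)
qed

lemma sgn_mult_diff_nonneg:
  fixes c d p r :: real
  assumes "d \<le> c" "0 \<le> d \<or> r = p"
  shows "0 \<le> (c * sgn p - d * sgn r) * p"
proof -
  have "d * (sgn r * p) \<le> d * \<bar>p\<bar>"
  proof (cases "0 \<le> d")
    case True
    have "sgn r * p \<le> \<bar>p\<bar>"
      by (auto simp: sgn_real_def)
    with True show ?thesis
      by (rule mult_left_mono[rotated])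
  next
    case False
    with assms(2) show ?thesis
      by (simp add: abs_sgn mult.commute)
  qed
  also have "\<dots> \<le> c * \<bar>p\<bar>"
    using assms(1) by (intro mult_right_mono) auto
  finally have "d * (sgn r * p) \<le> c * \<bar>p\<bar>" .
  then show ?thesis
    by (simp add: algebra_simps abs_sgn)
qed

lemma alt_step_AE_eq_of_height_le:
  assumes \<psi>: "alt_step c N \<psi>" and \<phi>: "alt_step d N \<phi>" and "d \<le> c"
    and coeff: "\<And>n. 0 \<le> n \<Longrightarrow> n \<le> int N \<Longrightarrow> fourier_coeff \<psi> n = fourier_coeff \<phi> n"
  shows "AE \<theta> in lebesgue. \<psi> (cis \<theta>) = \<phi> (cis \<theta>)"
proof -
  obtain P where P: "trig_poly N P" "AE \<theta> in lebesgue. P \<theta> \<noteq> 0 \<and> \<psi> (cis \<theta>) = c * sgn (P \<theta>)"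
    "if N = 0 then P = (\<lambda>_. 1) else 0 < c"
    using alt_step_sgn_trig_poly[OF \<psi>] by blast
  obtain R where R: "AE \<theta> in lebesgue. R \<theta> \<noteq> 0 \<and> \<phi> (cis \<theta>) = d * sgn (R \<theta>)"
    "if N = 0 then R = (\<lambda>_. 1) else 0 < d"
    using alt_step_sgn_trig_poly[OF \<phi>] by blast
  define g where "g \<theta> = \<psi> (cis \<theta>) - \<phi> (cis \<theta>)" for \<theta>
  have "AE \<theta> in lebesgue. P \<theta> \<noteq> 0 \<and> 0 \<le> g \<theta> * P \<theta>"
    using P(2) R(1)
  proof eventually_elim
    case (elim \<theta>)
    have "0 \<le> d \<or> R \<theta> = P \<theta>"
      using P(3) R(2) by (cases "N = 0") auto
    with elim show ?case
      using sgn_mult_diff_nonneg[OF \<open>d \<le> c\<close>] by (simp add: g_def)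
  qed
  moreover have "(LINT \<theta>:{0..2*pi}|lebesgue. complex_of_real (g \<theta>) * cis (- of_int n * \<theta>)) = 0"
    if "0 \<le> n" "n \<le> int N" for n
  proof -
    have "(LINT \<theta>:{0..2*pi}|lebesgue. complex_of_real (g \<theta>) * cis (- of_int n * \<theta>))
        = (LINT \<theta>:{0..2*pi}|lebesgue. complex_of_real (\<psi> (cis \<theta>)) * cis (- of_int n * \<theta>))
          - (LINT \<theta>:{0..2*pi}|lebesgue. complex_of_real (\<phi> (cis \<theta>)) * cis (- of_int n * \<theta>))"
      unfolding g_def of_real_diff left_diff_distrib
      by (intro set_integral_diff(2) alt_step_set_integrable[OF \<psi>] alt_step_set_integrable[OF \<phi>])
    then show ?thesis
      using coeff[OF that] by (simp add: fourier_coeff_def)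
  qed
  moreover have "g \<in> borel_measurable lebesgue"
    unfolding g_def using alt_step_measurable[OF \<psi>] alt_step_measurable[OF \<phi>] by measurable
  moreover have "AE \<theta> in lebesgue. \<bar>g \<theta>\<bar> \<le> \<bar>c\<bar> + \<bar>d\<bar>"
    using alt_step_AE_bounded[OF \<psi>] alt_step_AE_bounded[OF \<phi>]
    by eventually_elim (simp add: g_def)
  ultimately have "AE \<theta> in lebesgue. \<theta> \<in> {0..2*pi} \<longrightarrow> g \<theta> = 0"
    using AE_eq_0_of_nonneg_mult_trig_poly[OF _ _ P(1)] by blast
  then have "AE \<theta> in lebesgue. \<theta> \<in> {0<..<0 + 2*pi} \<longrightarrow> \<psi> (cis \<theta>) = \<phi> (cis \<theta>)"
    by eventually_elim (simp add: g_def)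
  then show ?thesis
    by (rule AE_periodic[rotated 2]) (simp_all add: cis_periodic)
qed

theorem theorem5p2:
  fixes N :: nat and \<psi> \<phi> :: "complex \<Rightarrow> real"
  assumes "\<exists>c. alt_step c N \<psi>"
    and "\<exists>d. alt_step d N \<phi>"
    and "\<forall>n::int. 0 \<le> n \<and> n \<le> int N \<longrightarrow> fourier_coeff \<psi> n = fourier_coeff \<phi> n"
  shows "(\<forall>n::int. fourier_coeff \<psi> n = fourier_coeff \<phi> n) \<and>
         (AE \<theta> in lebesgue. \<psi> (cis \<theta>) = \<phi> (cis \<theta>))"
proof -
  obtain c d where \<psi>: "alt_step c N \<psi>" and \<phi>: "alt_step d N \<phi>"
    using assms(1,2) by blast
  have ae: "AE \<theta> in lebesgue. \<psi> (cis \<theta>) = \<phi> (cis \<theta>)"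
  proof (cases "d \<le> c")
    case True
    then show ?thesis
      using alt_step_AE_eq_of_height_le[OF \<psi> \<phi>] assms(3) by blast
  next
    case False
    then have "AE \<theta> in lebesgue. \<phi> (cis \<theta>) = \<psi> (cis \<theta>)"
      using alt_step_AE_eq_of_height_le[OF \<phi> \<psi>] assms(3) by force
    then show ?thesis
      by (simp add: eq_commute)
  qed
  moreover from alt_step_measurable[OF \<psi>] ae have "fourier_coeff \<psi> = fourier_coeff \<phi>"
    by (rule fourier_coeff_cong_AE)
  ultimately show ?thesis
    by simp
qed

end
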